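(* Let $P_0(k)=C_{p0}T_{p0}^k-C_mT_m^k$ with $C_{p0},C_m>0$ and $0<T_{p0}<T_m<1$, and let $C_{pi}>0$ and $0<T_{pi}<T_m$, $i=1,\dots,N$. Then there exist positive numbers $C_{m0},\dots,C_{mN}$ with $\sum_{i=0}^N C_{mi}=C_m$ such that the functions $L_i(k)=C_{pi}T_{pi}^k-C_{mi}T_m^k$, $i=0,\dots,N$, all attain their minimum at one common point $k_1$ (i.e. $L_i'(k_1)=0$ for all $i$), and $P_0(k)+\sum_{i=1}^N C_{pi}T_{pi}^k=\sum_{i=0}^N L_i(k)$ for all real $k$. *)

theory Defs
  imports Complex_Main
begin

end

theory Submission
  imports Defs
begin

text \<open>
  The derivative of \<open>C a\<^sup>k - c b\<^sup>k\<close> is \<open>C ln a b\<^sup>k ((a/b)\<^sup>k - (a/b)\<^sup>k\<^sup>1)\<close> once \<open>c\<close>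
  is chosen to make \<open>k\<^sub>1\<close> critical; for \<open>0 < a < b < 1\<close> this changes sign from
  negative to positive at \<open>k\<^sub>1\<close>, so \<open>k\<^sub>1\<close> is the global minimum. It remains to find a
  common \<open>k\<^sub>1\<close> at which the critical coefficients of all \<open>L\<^sub>i\<close> add up to \<open>C\<^sub>m\<close>. As a
  function of \<open>k\<^sub>1\<close> their sum is \<open>\<Sum> c\<^sub>i (T\<^sub>p\<^sub>i/T\<^sub>m)\<^sup>k\<^sup>1\<close> with \<open>c\<^sub>i > 0\<close>, which is continuous,
  tends to \<open>0\<close> as \<open>k\<^sub>1 \<rightarrow> \<infinity>\<close> and is unbounded as \<open>k\<^sub>1 \<rightarrow> -\<infinity>\<close>, so the intermediate
  value theorem provides \<open>k\<^sub>1\<close>.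
\<close>

lemma powr_diff_has_real_derivative:
  fixes C c a b x :: real
  assumes "a > 0" "b > 0"
  shows "((\<lambda>k. C * a powr k - c * b powr k) has_real_derivative
           C * ln a * a powr x - c * ln b * b powr x) (at x)"
proof -
  have "((\<lambda>k. C * exp (k * ln a) - c * exp (k * ln b)) has_real_derivative
          C * (exp (x * ln a) * ln a) - c * (exp (x * ln b) * ln b)) (at x)"
    by (auto intro!: derivative_eq_intros)
  then show ?thesis
    using assms by (simp add: powr_def algebra_simps)
qed

text \<open>Solving \<open>C ln a a\<^sup>k\<^sup>1 = c ln b b\<^sup>k\<^sup>1\<close> for \<open>c\<close>.\<close>
definition critical_coeff :: "real \<Rightarrow> real \<Rightarrow> real \<Rightarrow> real \<Rightarrow> real" where
  "critical_coeff C a b k1 = C * ln a * a powr k1 / (ln b * b powr k1)"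

lemma critical_coeff_eq:
  assumes "a > 0" "b > 0"
  shows "critical_coeff C a b k1 = C * ln a / ln b * (a / b) powr k1"
  using assms by (simp add: critical_coeff_def powr_divide)

lemma critical_coeff_pos:
  assumes "C > 0" "0 < a" "a < b" "b < 1"
  shows "critical_coeff C a b k1 > 0"
proof -
  have "ln a < 0" "ln b < 0"
    using assms by auto
  then have "C * ln a / ln b > 0"
    using assms(1) by (simp add: divide_neg_neg mult_pos_neg)
  moreover have "(a / b) powr k1 > 0"
    using assms by simp
  ultimately show ?thesis
    using assms critical_coeff_eq[of a b C k1] by (metis mult_pos_pos order_less_trans)
qed

lemma critical_coeff_derivative_eq:
  assumes "0 < a" "0 < b" "ln b \<noteq> 0"
  shows "C * ln a * a powr x - critical_coeff C a b k1 * ln b * b powr x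
           = C * ln a * b powr x * ((a / b) powr x - (a / b) powr k1)"
  using assms by (simp add: critical_coeff_eq powr_divide field_simps)

lemma critical_coeff_has_real_derivative_0:
  assumes "0 < a" "0 < b" "ln b \<noteq> 0"
  shows "((\<lambda>k. C * a powr k - critical_coeff C a b k1 * b powr k) has_real_derivative 0) (at k1)"
  using powr_diff_has_real_derivative[OF assms(1,2), of C "critical_coeff C a b k1" k1]
    critical_coeff_derivative_eq[OF assms, of C k1 k1]
  by simp

lemma critical_coeff_minimum:
  assumes "C > 0" "0 < a" "a < b" "b < 1"
  shows "C * a powr k1 - critical_coeff C a b k1 * b powr k1
           \<le> C * a powr k - critical_coeff C a b k1 * b powr k"
proof -
  let ?L = "\<lambda>k. C * a powr k - critical_coeff C a b k1 * b powr k"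
  let ?r = "a / b"
  have "0 < b" "ln a < 0" "ln b < 0" "0 < ?r" "?r < 1"
    using assms by auto
  then have slope_neg: "C * ln a * b powr x < 0" for x
    using assms(1) by (simp add: mult_pos_neg mult_neg_pos)
  have deriv: "(?L has_real_derivative C * ln a * b powr x * (?r powr x - ?r powr k1)) (at x)" for x
    using powr_diff_has_real_derivative[of a b C "critical_coeff C a b k1" x]
      critical_coeff_derivative_eq[of a b C x k1] \<open>0 < b\<close> \<open>ln b < 0\<close> assms(2)
    by simp
  show ?thesis
  proof (cases "k \<le> k1")
    case True
    show ?thesis
    proof (rule DERIV_nonpos_imp_nonincreasing[OF True])
      fix x assume "x \<le> k1"
      then have "?r powr k1 \<le> ?r powr x"
        using \<open>0 < ?r\<close> \<open>?r < 1\<close> by (simp add: powr_mono')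
      then show "\<exists>y. (?L has_real_derivative y) (at x) \<and> y \<le> 0"
        using deriv slope_neg[of x] by (meson diff_ge_0_iff_ge less_imp_le mult_nonpos_nonneg)
    qed
  next
    case False
    then have "k1 \<le> k" by simp
    then show ?thesis
    proof (rule DERIV_nonneg_imp_nondecreasing)
      fix x assume "k1 \<le> x"
      then have "?r powr x \<le> ?r powr k1"
        using \<open>0 < ?r\<close> \<open>?r < 1\<close> by (simp add: powr_mono')
      then show "\<exists>y. (?L has_real_derivative y) (at x) \<and> y \<ge> 0"
        using deriv slope_neg[of x] by (meson diff_le_0_iff_le less_imp_le mult_nonpos_nonpos)
    qed
  qed
qed

lemma tendsto_powr_at_top_zero:
  fixes r :: real
  assumes "0 < r" "r < 1"
  shows "((\<lambda>k. r powr k) \<longlongrightarrow> 0) at_top"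
proof -
  have "filterlim (\<lambda>k. ln r * k) at_bot at_top"
    using assms by (intro filterlim_tendsto_neg_mult_at_bot[OF tendsto_const] filterlim_ident) auto
  then have "((\<lambda>k. exp (ln r * k)) \<longlongrightarrow> 0) at_top"
    using exp_at_bot filterlim_compose by blast
  then show ?thesis
    using assms by (simp add: powr_def mult.commute)
qed

lemma powr_sum_attains_pos:
  fixes c r :: "'i \<Rightarrow> real"
  assumes "finite I" "j \<in> I" "y > 0"
    and c_pos: "\<And>i. i \<in> I \<Longrightarrow> c i > 0"
    and r_bounds: "\<And>i. i \<in> I \<Longrightarrow> 0 < r i \<and> r i < 1"
  shows "\<exists>k. (\<Sum>i\<in>I. c i * r i powr k) = y"
proof -
  define F where "F k = (\<Sum>i\<in>I. c i * r i powr k)" for k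
  define ka where "ka = ln (y / c j) / ln (r j)"
  have "0 < c j" "0 < r j" "r j < 1"
    using c_pos r_bounds \<open>j \<in> I\<close> by auto
  then have "c j * r j powr ka = y"
    using \<open>y > 0\<close> by (simp add: ka_def powr_def)
  moreover have "c j * r j powr ka \<le> F ka"
    unfolding F_def using c_pos r_bounds \<open>j \<in> I\<close> \<open>finite I\<close>
    by (intro member_le_sum) (auto simp: less_imp_le)
  ultimately have "y \<le> F ka"
    by simp
  have "(F \<longlongrightarrow> (\<Sum>i\<in>I. c i * 0)) at_top"
    unfolding F_def using r_bounds
    by (intro tendsto_sum tendsto_mult tendsto_const tendsto_powr_at_top_zero) auto
  then have "eventually (\<lambda>k. F k < y) at_top"
    using \<open>y > 0\<close> by (simp add: order_tendstoD)
  then have "eventually (\<lambda>k. F k < y \<and> ka \<le> k) at_top"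
    by (rule eventually_conj[OF _ eventually_ge_at_top])
  then obtain kb where "F kb < y" "ka \<le> kb"
    by (auto simp: eventually_at_top_linorder)
  moreover have "continuous_on {ka..kb} F"
    unfolding F_def using r_bounds by (intro continuous_intros) force+
  ultimately obtain k where "F k = y"
    using IVT2'[of F kb y ka] \<open>y \<le> F ka\<close> by (auto simp: less_imp_le)
  then show ?thesis
    unfolding F_def by blast
qed

lemma sum_diff_distribute_weight:
  fixes f w :: "nat \<Rightarrow> real"
  assumes "(\<Sum>i\<le>N. w i) = W"
  shows "(f 0 - W * t) + (\<Sum>i=1..N. f i) = (\<Sum>i\<le>N. f i - w i * t)"
proof -
  have "(\<Sum>i\<le>N. f i - w i * t) = (\<Sum>i\<le>N. f i) - W * t"
    using assms by (simp add: sum_subtractf flip: sum_distrib_right)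
  also have "(\<Sum>i\<le>N. f i) = f 0 + (\<Sum>i=1..N. f i)"
    by (simp add: atMost_atLeast0 sum.atLeast_Suc_atMost)
  finally show ?thesis
    by simp
qed

theorem corollary2:
  fixes Cp Tp :: "nat \<Rightarrow> real" and Cm Tm :: real and N :: nat
  assumes Cp_pos: "\<forall>i\<le>N. Cp i > 0"
    and Cm_pos: "Cm > 0"
    and Tp_pos: "\<forall>i\<le>N. 0 < Tp i"
    and Tp_lt: "\<forall>i\<le>N. Tp i < Tm"
    and Tm_lt1: "Tm < 1"
  shows "\<exists>Cmi :: nat \<Rightarrow> real.
           (\<forall>i\<le>N. Cmi i > 0) \<and> (\<Sum>i\<le>N. Cmi i) = Cm \<and>
           (\<exists>k1 :: real. \<forall>i\<le>N.
               ((\<lambda>k. Cp i * Tp i powr k - Cmi i * Tm powr k) has_real_derivative 0) (at k1) \<and>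
               (\<forall>k. Cp i * Tp i powr k1 - Cmi i * Tm powr k1 \<le> Cp i * Tp i powr k - Cmi i * Tm powr k)) \<and>
           (\<forall>k :: real. (Cp 0 * Tp 0 powr k - Cm * Tm powr k) + (\<Sum>i=1..N. Cp i * Tp i powr k)
               = (\<Sum>i\<le>N. Cp i * Tp i powr k - Cmi i * Tm powr k))"
proof -
  have Tm_pos: "0 < Tm"
    using Tp_pos Tp_lt by (meson le0 less_trans)
  then have "ln Tm < 0"
    using Tm_lt1 by simp
  have ratio_bounds: "0 < Tp i / Tm \<and> Tp i / Tm < 1" if "i \<le> N" for i
    using that Tp_pos Tp_lt Tm_pos by simp
  have "Tp i < 1" if "i \<le> N" for i
    using that Tp_lt Tm_lt1 by force
  then have slope_pos: "Cp i * ln (Tp i) / ln Tm > 0" if "i \<le> N" for i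
    using that Cp_pos Tp_pos \<open>ln Tm < 0\<close> by (simp add: divide_neg_neg mult_pos_neg)
  have "\<exists>k. (\<Sum>i\<le>N. Cp i * ln (Tp i) / ln Tm * (Tp i / Tm) powr k) = Cm"
    by (rule powr_sum_attains_pos) (use Cm_pos slope_pos ratio_bounds in auto)
  then obtain k1 where k1: "(\<Sum>i\<le>N. Cp i * ln (Tp i) / ln Tm * (Tp i / Tm) powr k1) = Cm"
    by blast
  define Cmi where "Cmi i = critical_coeff (Cp i) (Tp i) Tm k1" for i
  have "Cmi i = Cp i * ln (Tp i) / ln Tm * (Tp i / Tm) powr k1" if "i \<le> N" for i
    unfolding Cmi_def using that Tp_pos Tm_pos by (intro critical_coeff_eq) auto
  then have Cmi_sum: "(\<Sum>i\<le>N. Cmi i) = Cm"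
    unfolding k1[symmetric] by (intro sum.cong) auto
  have Cmi_pos: "\<forall>i\<le>N. Cmi i > 0"
    unfolding Cmi_def using assms by (intro allI impI critical_coeff_pos) auto
  have common_minimum: "((\<lambda>k. Cp i * Tp i powr k - Cmi i * Tm powr k) has_real_derivative 0) (at k1) \<and>
      (\<forall>k. Cp i * Tp i powr k1 - Cmi i * Tm powr k1 \<le> Cp i * Tp i powr k - Cmi i * Tm powr k)"
    if "i \<le> N" for i
    unfolding Cmi_def using that assms Tm_pos \<open>ln Tm < 0\<close>
    by (intro conjI allI critical_coeff_has_real_derivative_0 critical_coeff_minimum) auto
  have "(Cp 0 * Tp 0 powr k - Cm * Tm powr k) + (\<Sum>i=1..N. Cp i * Tp i powr k)
          = (\<Sum>i\<le>N. Cp i * Tp i powr k - Cmi i * Tm powr k)" for k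
    by (rule sum_diff_distribute_weight[OF Cmi_sum])
  then show ?thesis
    using Cmi_pos Cmi_sum common_minimum by (intro exI[of _ Cmi] conjI exI[of _ k1]) blast+
qed

end
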